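(* In the setting described in the context, let $p$ be a facet of $\Delta_\lambda$ of $\mathbf a$-degree at least $1$, with its nodes labelled $1,\dots,k-1$ so that $p$ is identified with the simplex on $[k-1]$. If $[k-1]\setminus L$ is a facet of $F_{<p}\cap p$, where $L$ is a set of consecutive indices, then $|L|\le 2$.
   Context: Let $n,d\ge2$, $V(n,d)=\{\mathbf b\in\mathbb N^n:\sum_i b_i=d\}$, and let $\mathbf a\in V(n,d)$ satisfy $a_1\le\dots\le a_n$ and $\mathbf a\notin\{(0,\dots,0,d),(0,\dots,0,1,d-1),(0,\dots,0,2,d-2)\}$. Let $\Gamma=V(n,d)\setminus\{\mathbf a\}$ and assume $\Gamma+\Gamma=V(n,2d)$. Order $V(n,d)$ lexicographically ($b<c$ iff the first nonzero coordinate of $c-b$ is positive). Let $\lambda$ be in the semigroup generated by $\Gamma$, $k=|\lambda|=(\sum_i\lambda_i)/d$. A closed chain from $0$ to $\lambda$ is a sequence $0=v_0,v_1,\dots,v_k=\lambda$ in $\mathbb N^n$ with all links $v_j-v_{j-1}\in V(n,d)$; its $\mathbf a$-degree is the number of links equal to $\mathbf a$; its open chain is $\{v_1,\dots,v_{k-1}\}$, with $v_j$ labelled $j$. $\Delta_\lambda$ is the simplicial complex whose facets are all these open chains. Facets are ordered: $q<p$ iff $\mathbf a$-degree of $q$ is smaller than that of $p$, or equal and the link sequence of $q$ is lexicographically smaller than that of $p$ (first links compared first, using the order on $V(n,d)$). $F_{<p}$ is the subcomplex of $\Delta_\lambda$ generated by the facets $q<p$; $p$ also denotes the full simplex on its nodes.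 *)

theory Defs
  imports Main
begin

text \<open>Vectors in N^n are functions nat => nat vanishing from index n on
  (coordinate i of the paper is index i-1 here).\<close>

definition Vnd :: "nat \<Rightarrow> nat \<Rightarrow> (nat \<Rightarrow> nat) set" where
  "Vnd n d = {b. (\<forall>i\<ge>n. b i = 0) \<and> (\<Sum>i<n. b i) = d}"

definition vadd :: "(nat \<Rightarrow> nat) \<Rightarrow> (nat \<Rightarrow> nat) \<Rightarrow> (nat \<Rightarrow> nat)" where
  "vadd x y = (\<lambda>i. x i + y i)"

definition lex_less :: "nat \<Rightarrow> (nat \<Rightarrow> nat) \<Rightarrow> (nat \<Rightarrow> nat) \<Rightarrow> bool" where
  "lex_less n b c = (\<exists>i<n. (\<forall>j<i. b j = c j) \<and> b i < c i)"

definition gen_semigroup :: "(nat \<Rightarrow> nat) set \<Rightarrow> (nat \<Rightarrow> nat) set" where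
  "gen_semigroup G = {(\<lambda>i. \<Sum>g\<leftarrow>gs. g i) | gs. gs \<noteq> [] \<and> set gs \<subseteq> G}"

text \<open>A closed chain is given by its list of links; node j is the sum of the first j links.\<close>
definition node :: "(nat \<Rightarrow> nat) list \<Rightarrow> nat \<Rightarrow> (nat \<Rightarrow> nat)" where
  "node ls j = (\<lambda>i. \<Sum>l\<leftarrow>take j ls. l i)"

definition is_chain :: "nat \<Rightarrow> nat \<Rightarrow> (nat \<Rightarrow> nat) \<Rightarrow> (nat \<Rightarrow> nat) list \<Rightarrow> bool" where
  "is_chain n d lam ls = (set ls \<subseteq> Vnd n d \<and> node ls (length ls) = lam)"

definition open_chain :: "(nat \<Rightarrow> nat) list \<Rightarrow> (nat \<Rightarrow> nat) set" where
  "open_chain ls = {node ls j | j. 1 \<le> j \<and> j \<le> length ls - 1}"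

definition adeg :: "(nat \<Rightarrow> nat) \<Rightarrow> (nat \<Rightarrow> nat) list \<Rightarrow> nat" where
  "adeg a ls = count_list ls a"

fun seq_less :: "nat \<Rightarrow> (nat \<Rightarrow> nat) list \<Rightarrow> (nat \<Rightarrow> nat) list \<Rightarrow> bool" where
  "seq_less n (x # xs) (y # ys) = (lex_less n x y \<or> (x = y \<and> seq_less n xs ys))"
| "seq_less n _ _ = False"

definition facet_less :: "nat \<Rightarrow> (nat \<Rightarrow> nat) \<Rightarrow> (nat \<Rightarrow> nat) list \<Rightarrow> (nat \<Rightarrow> nat) list \<Rightarrow> bool" where
  "facet_less n a q p = (adeg a q < adeg a p \<or> (adeg a q = adeg a p \<and> seq_less n q p))"

text \<open>Faces of F_{<p} \<inter> p: subsets of the nodes of p contained in some facet q < p.\<close>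
definition face_Fless_cap :: "nat \<Rightarrow> nat \<Rightarrow> (nat \<Rightarrow> nat) \<Rightarrow> (nat \<Rightarrow> nat) \<Rightarrow> (nat \<Rightarrow> nat) list
    \<Rightarrow> (nat \<Rightarrow> nat) set \<Rightarrow> bool" where
  "face_Fless_cap n d a lam p S = (S \<subseteq> open_chain p \<and>
     (\<exists>q. is_chain n d lam q \<and> facet_less n a q p \<and> S \<subseteq> open_chain q))"

definition facet_Fless_cap :: "nat \<Rightarrow> nat \<Rightarrow> (nat \<Rightarrow> nat) \<Rightarrow> (nat \<Rightarrow> nat) \<Rightarrow> (nat \<Rightarrow> nat) list
    \<Rightarrow> (nat \<Rightarrow> nat) set \<Rightarrow> bool" where
  "facet_Fless_cap n d a lam p S = (face_Fless_cap n d a lam p S \<and>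
     (\<forall>T. face_Fless_cap n d a lam p T \<and> S \<subseteq> T \<longrightarrow> T = S))"

end

theory Submission
  imports Defs
begin

text \<open>Suppose the window L = {i..j} has at least three nodes and let q < p be a facet containing
  all other nodes of p. Then p and q differ only in the segment of at least four links spanning L,
  and the segment of q is smaller than that of p. It suffices to find a segment of the same length
  and sum that is smaller than the segment of p and passes through an interior node of p's segment:
  splicing it into p gives a facet below p containing one node of L besides the others,
  contradicting maximality.

  If the segment contains a, two adjacent links one of which is a are replaced by two links of
  \<Gamma> with the same sum, which exists since \<Gamma> + \<Gamma> = V(n,2d). Otherwise we may swap the first two
  links, or reuse q when it starts with the same link, or lower the first (resp. second) link
  lexicographically inside the sum of all links but the last (resp. first) and refill the rest
  by links of \<Gamma>. If none of this is possible, both the first and the second link can only be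
  lowered to a, which forces a to be supported on at most two coordinates in one of the
  excluded shapes.\<close>

definition vsum :: "(nat \<Rightarrow> nat) list \<Rightarrow> nat \<Rightarrow> nat" where
  "vsum ls = (\<lambda>i. \<Sum>l\<leftarrow>ls. l i)"

lemma node_eq_vsum_take: "node ls j = vsum (take j ls)"
  by (simp add: node_def vsum_def)

lemma vsum_Nil [simp]: "vsum [] i = 0"
  by (simp add: vsum_def)

lemma vsum_Cons [simp]: "vsum (l # ls) i = l i + vsum ls i"
  by (simp add: vsum_def)

lemma vsum_append [simp]: "vsum (xs @ ys) i = vsum xs i + vsum ys i"
  by (simp add: vsum_def)

lemma node_length: "node ls (length ls) = vsum ls"
  by (simp add: node_eq_vsum_take)

lemma node_Suc: "t < length ls \<Longrightarrow> node ls (Suc t) x = node ls t x + (ls ! t) x"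
  by (simp add: node_eq_vsum_take take_Suc_conv_app_nth)

lemma node_append3:
  "node (P @ X @ B) l i = node P l i + node X (l - length P) i + node B (l - length P - length X) i"
  by (simp add: node_eq_vsum_take)

lemma node_splice_outside:
  assumes "length X = length Y" "vsum X = vsum Y" "l \<le> length P \<or> length P + length X \<le> l"
  shows "node (P @ X @ B) l = node (P @ Y @ B) l"
proof (rule ext)
  fix x
  have "node X (l - length P) x = node Y (l - length P) x"
    using assms by (auto simp: node_eq_vsum_take)
  then show "node (P @ X @ B) l x = node (P @ Y @ B) l x"
    using assms(1) by (simp add: node_append3)
qed

lemma node_splice_inside:
  assumes "length X = length Y" "node X r = node Y r"
  shows "node (P @ X @ B) (length P + r) = node (P @ Y @ B) (length P + r)"
  using assms by (simp add: node_append3 fun_eq_iff)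

lemma VndI: "(\<And>k. n \<le> k \<Longrightarrow> x k = 0) \<Longrightarrow> (\<Sum>i<n. x i) = d \<Longrightarrow> x \<in> Vnd n d"
  by (simp add: Vnd_def)

lemma Vnd_vanishes: "x \<in> Vnd n d \<Longrightarrow> n \<le> k \<Longrightarrow> x k = 0"
  by (simp add: Vnd_def)

lemma Vnd_sum: "x \<in> Vnd n d \<Longrightarrow> (\<Sum>i<n. x i) = d"
  by (simp add: Vnd_def)

lemma Vnd_support: "x \<in> Vnd n d \<Longrightarrow> 0 < x k \<Longrightarrow> k < n"
  using Vnd_vanishes[of x n d k] by (cases "k < n") auto

lemma vsum_in_Vnd: "set ls \<subseteq> Vnd n d \<Longrightarrow> vsum ls \<in> Vnd n (length ls * d)"
proof (induction ls)
  case Nil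
  show ?case by (simp add: Vnd_def vsum_def)
next
  case (Cons l ls)
  then have l: "l \<in> Vnd n d" and IH: "vsum ls \<in> Vnd n (length ls * d)" by auto
  show ?case
  proof (rule VndI)
    show "vsum (l # ls) k = 0" if "n \<le> k" for k
      using Vnd_vanishes[OF l that] Vnd_vanishes[OF IH that] by simp
    have "(\<Sum>i<n. vsum (l # ls) i) = (\<Sum>i<n. l i) + (\<Sum>i<n. vsum ls i)"
      by (simp add: sum.distrib)
    then show "(\<Sum>i<n. vsum (l # ls) i) = length (l # ls) * d"
      using Vnd_sum[OF l] Vnd_sum[OF IH] by simp
  qed
qed

lemma vadd_in_Vnd: "x \<in> Vnd n d \<Longrightarrow> y \<in> Vnd n e \<Longrightarrow> vadd x y \<in> Vnd n (d + e)"
  unfolding Vnd_def vadd_def by (auto simp: sum.distrib)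

lemma diff_in_Vnd:
  assumes "\<forall>k. u k \<le> v k" "u \<in> Vnd n s" "v \<in> Vnd n t"
  shows "(\<lambda>k. v k - u k) \<in> Vnd n (t - s)"
proof (rule VndI)
  show "v k - u k = 0" if "n \<le> k" for k
    using Vnd_vanishes[OF assms(3) that] by simp
  have "(\<Sum>k<n. v k - u k) = (\<Sum>k<n. v k) - (\<Sum>k<n. u k)"
    by (rule sum_subtractf_nat) (use assms(1) in simp)
  then show "(\<Sum>k<n. v k - u k) = t - s"
    using Vnd_sum[OF assms(2)] Vnd_sum[OF assms(3)] by simp
qed

lemma exists_Vnd_below:
  assumes "\<forall>k\<ge>n. v k = 0" "s \<le> (\<Sum>i<n. v i)"
  shows "\<exists>u. (\<forall>k. u k \<le> v k) \<and> u \<in> Vnd n s"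
  using assms(2)
proof (induction s)
  case 0
  show ?case by (intro exI[of _ "\<lambda>_. 0"]) (simp add: Vnd_def)
next
  case (Suc s)
  then obtain u where u: "\<forall>k. u k \<le> v k" "u \<in> Vnd n s" by auto
  have "\<exists>i<n. u i < v i"
  proof (rule ccontr)
    assume "\<not> (\<exists>i<n. u i < v i)"
    then have "\<forall>i<n. v i \<le> u i" by (meson not_less)
    then have "(\<Sum>i<n. v i) \<le> (\<Sum>i<n. u i)" by (intro sum_mono) simp
    then show False using Vnd_sum[OF u(2)] Suc.prems by simp
  qed
  then obtain i where i: "i < n" "u i < v i" by blast
  let ?u = "\<lambda>k. u k + (if k = i then 1 else 0)"
  have "?u \<in> Vnd n (Suc s)"
  proof (rule VndI)
    show "?u k = 0" if "n \<le> k" for k using Vnd_vanishes[OF u(2) that] i(1) that by simp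
    show "(\<Sum>k<n. ?u k) = Suc s" using Vnd_sum[OF u(2)] i(1) by (simp add: sum.distrib)
  qed
  moreover have "\<forall>k. ?u k \<le> v k" using u(1) i(2) by (simp add: Suc_le_eq)
  ultimately show ?case by (intro exI[of _ ?u]) simp
qed

lemma node_in_Vnd:
  assumes "set ls \<subseteq> Vnd n d" "l \<le> length ls"
  shows "node ls l \<in> Vnd n (l * d)"
proof -
  have "set (take l ls) \<subseteq> Vnd n d" using set_take_subset[of l ls] assms(1) by blast
  then show ?thesis using vsum_in_Vnd assms(2) by (fastforce simp: node_eq_vsum_take)
qed

lemma node_index_eq:
  assumes "set ls \<subseteq> Vnd n d" "set ms \<subseteq> Vnd n d" "l \<le> length ls" "l' \<le> length ms"
    "node ls l = node ms l'" "0 < d"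
  shows "l = l'"
proof -
  have "node ls l \<in> Vnd n (l * d)" "node ms l' \<in> Vnd n (l' * d)"
    using node_in_Vnd assms by blast+
  then have "l * d = l' * d" using assms(5) by (simp add: Vnd_def)
  then show ?thesis using assms(6) by simp
qed

lemma length_eq_if_vsum_eq:
  assumes "set p \<subseteq> Vnd n d" "set q \<subseteq> Vnd n d" "vsum p = vsum q" "0 < d"
  shows "length p = length q"
  using node_index_eq[OF assms(1,2) _ _ _ assms(4), of "length p" "length q"] assms(3)
  by (simp add: node_length)

lemma lex_less_irrefl: "\<not> lex_less n x x"
  by (simp add: lex_less_def)

lemma seq_less_irrefl: "\<not> seq_less n xs xs"
  by (induction xs) (auto simp: lex_less_irrefl)

lemma seq_less_append_left: "seq_less n (P @ xs) (P @ ys) = seq_less n xs ys"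
  by (induction P) (auto simp: lex_less_irrefl)

lemma seq_less_append_right:
  "length xs = length ys \<Longrightarrow> seq_less n (xs @ B) (ys @ B) = seq_less n xs ys"
proof (induction xs arbitrary: ys)
  case Nil
  then show ?case by (simp add: seq_less_irrefl)
next
  case (Cons x xs)
  then obtain y ys' where "ys = y # ys'" by (cases ys) auto
  with Cons show ?case by auto
qed

lemma facet_less_splice:
  assumes "length X = length Y"
  shows "facet_less n a (P @ X @ B) (P @ Y @ B) = facet_less n a X Y"
  using assms by (simp add: facet_less_def adeg_def seq_less_append_left seq_less_append_right
      flip: append_assoc)

definition smaller_rerouting ::
    "nat \<Rightarrow> nat \<Rightarrow> (nat \<Rightarrow> nat) \<Rightarrow> (nat \<Rightarrow> nat) list \<Rightarrow> (nat \<Rightarrow> nat) list \<Rightarrow> bool" where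
  "smaller_rerouting n d a sp' sp \<longleftrightarrow>
     set sp' \<subseteq> Vnd n d \<and> length sp' = length sp \<and> vsum sp' = vsum sp \<and> facet_less n a sp' sp \<and>
     (\<exists>r. 0 < r \<and> r < length sp \<and> node sp' r = node sp r)"

lemma split_around_member:
  assumes "x \<in> set xs" "2 \<le> length xs"
  obtains pre u v post where "xs = pre @ [u, v] @ post" "x = u \<or> x = v"
proof -
  obtain ys zs where xs: "xs = ys @ x # zs" using split_list assms(1) by metis
  show thesis
  proof (cases zs)
    case (Cons z zs')
    then show ?thesis using that[of ys x z zs'] xs by simp
  next
    case Nil
    then have "ys \<noteq> []" using assms(2) xs by auto
    then have "ys = butlast ys @ [last ys]" by simp
    then show ?thesis
      using that[of "butlast ys" "last ys" x "[]"] xs Nil by (metis append.assoc append_Cons append_Nil)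
  qed
qed

definition lead :: "(nat \<Rightarrow> nat) \<Rightarrow> nat" where
  "lead x = (LEAST k. 0 < x k)"

lemma lead_props:
  assumes "x \<in> Vnd n d" "0 < d"
  shows "0 < x (lead x)" "lead x < n" "k < lead x \<Longrightarrow> x k = 0"
proof -
  have "\<exists>k. 0 < x k"
  proof (rule ccontr)
    assume "\<nexists>k. 0 < x k"
    then show False using Vnd_sum[OF assms(1)] assms(2) by simp
  qed
  then show pos: "0 < x (lead x)" unfolding lead_def by (rule LeastI_ex)
  then show "lead x < n" by (rule Vnd_support[OF assms(1)])
  show "k < lead x \<Longrightarrow> x k = 0" unfolding lead_def using not_less_Least by blast
qed

lemma lead_le_if_not_lex_less:
  assumes "a1 \<in> Vnd n d" "0 < d" "\<not> lex_less n a2 a1"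
  shows "lead a2 \<le> lead a1"
proof (rule ccontr)
  assume "\<not> lead a2 \<le> lead a1"
  then have "a2 k = 0" if "k \<le> lead a1" for k
    using that not_less_Least[of k "\<lambda>k. 0 < a2 k"] unfolding lead_def by simp
  then have "lex_less n a2 a1"
    using lead_props[OF assms(1,2)] unfolding lex_less_def by (intro exI[of _ "lead a1"]) auto
  with assms(3) show False ..
qed

lemma lead_less_if_lex_less_exceeds:
  assumes "lex_less n b a" "a t < b t"
  shows "lead a < t"
proof -
  obtain i where i: "\<forall>j<i. b j = a j" "b i < a i"
    using assms(1) unfolding lex_less_def by blast
  have "i < t" using i assms(2) by (metis less_asym nat_neq_iff)
  moreover have "lead a \<le> i" unfolding lead_def using i(2) by (intro Least_le) simp
  ultimately show ?thesis by simp
qed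

definition move_unit :: "(nat \<Rightarrow> nat) \<Rightarrow> nat \<Rightarrow> nat \<Rightarrow> nat \<Rightarrow> nat" where
  "move_unit x s t = (\<lambda>k. x k - (if k = s then 1 else 0) + (if k = t then 1 else 0))"

lemma move_unit_in_Vnd:
  assumes "x \<in> Vnd n d" "0 < x s" "t < n"
  shows "move_unit x s t \<in> Vnd n d"
proof (rule VndI)
  have s: "s < n" using Vnd_support assms(1,2) .
  show "move_unit x s t k = 0" if "n \<le> k" for k
    using Vnd_vanishes[OF assms(1) that] that s assms(3) by (simp add: move_unit_def)
  have "move_unit x s t k + (if k = s then 1 else 0) = x k + (if k = t then 1 else 0)" for k
    using assms(2) by (simp add: move_unit_def)
  then have "(\<Sum>k<n. move_unit x s t k + (if k = s then 1 else 0))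
      = (\<Sum>k<n. x k + (if k = t then 1 else 0))"
    by presburger
  then show "(\<Sum>k<n. move_unit x s t k) = d"
    using Vnd_sum[OF assms(1)] s assms(3) by (simp add: sum.distrib)
qed

lemma lex_less_move_unit:
  assumes "s < t" "0 < x s" "s < n"
  shows "lex_less n (move_unit x s t) x"
  unfolding lex_less_def move_unit_def using assms by (intro exI[of _ s]) auto

definition only_lex_smaller ::
    "nat \<Rightarrow> nat \<Rightarrow> (nat \<Rightarrow> nat) \<Rightarrow> (nat \<Rightarrow> nat) \<Rightarrow> (nat \<Rightarrow> nat) \<Rightarrow> bool" where
  "only_lex_smaller n d A a D \<longleftrightarrow> (\<forall>x\<in>Vnd n d. (\<forall>k. x k \<le> a k + D k) \<and> lex_less n x a \<longrightarrow> x = A)"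

context
  fixes n d :: nat and A a D :: "nat \<Rightarrow> nat"
  assumes d_pos: "0 < d" and a_in: "a \<in> Vnd n d" and only: "only_lex_smaller n d A a D"
begin

lemma only_lex_smallerD: "x \<in> Vnd n d \<Longrightarrow> \<forall>k. x k \<le> a k + D k \<Longrightarrow> lex_less n x a \<Longrightarrow> x = A"
  using only unfolding only_lex_smaller_def by blast

lemma excluded_eq_move_unit:
  assumes "s < j" "0 < a s" "j < n" "1 \<le> D j"
  shows "A = move_unit a s j"
proof (rule only_lex_smallerD[symmetric])
  show "move_unit a s j \<in> Vnd n d" using move_unit_in_Vnd a_in assms(2,3) .
  show "\<forall>k. move_unit a s j k \<le> a k + D k" using assms(1,4) by (simp add: move_unit_def)
  show "lex_less n (move_unit a s j) a"
    using lex_less_move_unit assms(1,2) Vnd_support[OF a_in assms(2)] .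
qed

lemma excluded_eq_move_lead:
  "lead a < j \<Longrightarrow> j < n \<Longrightarrow> 1 \<le> D j \<Longrightarrow> A = move_unit a (lead a) j"
  using excluded_eq_move_unit lead_props(1)[OF a_in d_pos] by blast

lemma zero_between_lead_and_room:
  assumes "lead a < s" "s < j" "j < n" "1 \<le> D j"
  shows "a s = 0"
proof (rule ccontr)
  assume "a s \<noteq> 0"
  then have "move_unit a s j = move_unit a (lead a) j"
    using excluded_eq_move_unit assms excluded_eq_move_lead by (metis gr0I less_trans)
  from fun_cong[OF this, of "lead a"] show False
    using assms(1,2) lead_props(1)[OF a_in d_pos] by (simp add: move_unit_def)
qed

lemma room_index_unique:
  assumes "lead a < j" "j < n" "1 \<le> D j" "lead a < j'" "j' < n" "1 \<le> D j'"
  shows "j = j'"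
proof -
  have "move_unit a (lead a) j = move_unit a (lead a) j'"
    using excluded_eq_move_lead assms by metis
  from fun_cong[OF this, of j] show ?thesis using assms(1) by (auto simp: move_unit_def split: if_splits)
qed

lemma lead_unit_if_double_room:
  assumes j: "lead a < j" "j < n" "2 \<le> D j"
  shows "a (lead a) = 1 \<and> (\<forall>k>j. a k = 0)"
proof -
  define \<mu> where "\<mu> = lead a"
  have \<mu>: "0 < a \<mu>" "\<mu> < n" "\<And>k. k < \<mu> \<Longrightarrow> a k = 0" "\<mu> < j"
    using lead_props[OF a_in d_pos] j(1) unfolding \<mu>_def by auto
  have A_eq: "A = move_unit a \<mu> j" using excluded_eq_move_lead j unfolding \<mu>_def by simp
  have moved_in: "move_unit a \<mu> j \<in> Vnd n d" using move_unit_in_Vnd[OF a_in \<mu>(1) j(2)] .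
  \<comment> \<open>A second unit moved into j, from \<mu> or from beyond j, is another lowering of a.\<close>
  have second_move: "move_unit (move_unit a \<mu> j) s j = A"
    if "s = \<mu> \<or> j < s" "0 < move_unit a \<mu> j s" for s
  proof (rule only_lex_smallerD)
    show "move_unit (move_unit a \<mu> j) s j \<in> Vnd n d" using move_unit_in_Vnd[OF moved_in that(2) j(2)] .
    show "\<forall>k. move_unit (move_unit a \<mu> j) s j k \<le> a k + D k" using j(3) \<mu>(4) that(1)
      by (auto simp: move_unit_def)
    show "lex_less n (move_unit (move_unit a \<mu> j) s j) a"
      unfolding lex_less_def using \<mu> that by (intro exI[of _ \<mu>]) (auto simp: move_unit_def)
  qed
  have "\<not> 2 \<le> a \<mu>"
  proof
    assume "2 \<le> a \<mu>"
    then have "move_unit (move_unit a \<mu> j) \<mu> j = A"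
      using \<mu>(4) by (intro second_move) (auto simp: move_unit_def)
    from fun_cong[OF this, of \<mu>] show False using A_eq \<open>2 \<le> a \<mu>\<close> \<mu>(4) by (simp add: move_unit_def)
  qed
  moreover have "a k = 0" if "j < k" for k
  proof (rule ccontr)
    assume "a k \<noteq> 0"
    then have "move_unit (move_unit a \<mu> j) k j = A"
      using that \<mu>(4) by (intro second_move) (auto simp: move_unit_def)
    from fun_cong[OF this, of k] show False using A_eq \<open>a k \<noteq> 0\<close> that \<mu>(4) by (simp add: move_unit_def)
  qed
  ultimately show ?thesis using \<mu>(1) unfolding \<mu>_def by simp
qed

end

locale sumset_closed =
  fixes n d :: nat and A :: "nat \<Rightarrow> nat"
  assumes sumset: "{vadd x y | x y. x \<in> Vnd n d - {A} \<and> y \<in> Vnd n d - {A}} = Vnd n (2 * d)"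
begin

lemma sumset_decomp:
  assumes "v \<in> Vnd n (2 * d)"
  obtains x y where "x \<in> Vnd n d - {A}" "y \<in> Vnd n d - {A}" "v = vadd x y"
  using assms sumset by blast

lemma chain_decomposition:
  assumes "2 \<le> m" "v \<in> Vnd n (m * d)"
  shows "\<exists>ls. length ls = m \<and> set ls \<subseteq> Vnd n d - {A} \<and> vsum ls = v"
  using assms
proof (induction m arbitrary: v rule: nat_induct_at_least)
  case base
  then obtain x y where "x \<in> Vnd n d - {A}" "y \<in> Vnd n d - {A}" "v = vadd x y"
    using sumset_decomp by auto
  then show ?case by (intro exI[of _ "[x, y]"]) (auto simp: vadd_def)
next
  case (Suc m)
  have "2 * d \<le> (\<Sum>i<n. v i)" using Vnd_sum[OF Suc.prems] Suc.hyps by simp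
  then obtain u where u: "\<forall>k. u k \<le> v k" "u \<in> Vnd n (2 * d)"
    using exists_Vnd_below Vnd_vanishes[OF Suc.prems] by blast
  then obtain x y where xy: "x \<in> Vnd n d - {A}" "y \<in> Vnd n d - {A}" "u = vadd x y"
    using sumset_decomp by blast
  have x_le: "\<forall>k. x k \<le> v k" using u(1) xy(3) by (simp add: vadd_def) (meson le_add1 le_trans)
  have "(\<lambda>k. v k - x k) \<in> Vnd n (Suc m * d - d)"
    using diff_in_Vnd[OF x_le] xy(1) Suc.prems by blast
  then obtain ls where ls: "length ls = m" "set ls \<subseteq> Vnd n d - {A}" "vsum ls = (\<lambda>k. v k - x k)"
    using Suc.IH by auto
  then have "vsum (x # ls) = v" using x_le by (simp add: fun_eq_iff)
  with ls xy(1) show ?case by (intro exI[of _ "x # ls"]) auto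
qed

lemma chain_from_first_link:
  assumes "x \<in> Vnd n d" "\<forall>k. x k \<le> w k" "w \<in> Vnd n (Suc m * d)" "2 \<le> m"
  shows "\<exists>ls. length ls = m \<and> set ls \<subseteq> Vnd n d - {A} \<and> vsum (x # ls) = w"
proof -
  have "(\<lambda>k. w k - x k) \<in> Vnd n (Suc m * d - d)" using diff_in_Vnd assms(1-3) by blast
  then have "(\<lambda>k. w k - x k) \<in> Vnd n (m * d)" by simp
  then obtain ls where "length ls = m" "set ls \<subseteq> Vnd n d - {A}" "vsum ls = (\<lambda>k. w k - x k)"
    using chain_decomposition[OF assms(4)] by blast
  then show ?thesis using assms(2) by (intro exI[of _ ls]) (simp add: fun_eq_iff)
qed


lemma rerouting_through_excluded:
  assumes sp: "set sp \<subseteq> Vnd n d" "A \<in> set sp" "3 \<le> length sp"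
  shows "\<exists>sp'. smaller_rerouting n d A sp' sp"
proof -
  obtain pre u v post where split: "sp = pre @ [u, v] @ post" "A = u \<or> A = v"
    using split_around_member sp(2,3) by (metis Suc_leD numeral_3_eq_3 numeral_2_eq_2)
  have "vadd u v \<in> Vnd n (2 * d)" using vadd_in_Vnd[of u n d v d] sp(1) split(1) by (simp add: mult_2)
  then obtain x y where xy: "x \<in> Vnd n d - {A}" "y \<in> Vnd n d - {A}" "vadd u v = vadd x y"
    by (rule sumset_decomp)
  have same_sum: "vsum [x, y] = vsum [u, v]" using xy(3) by (simp add: vadd_def fun_eq_iff)
  define r where "r = (if pre = [] then 2 else length pre)"
  show ?thesis unfolding smaller_rerouting_def
  proof (intro exI[of _ "pre @ [x, y] @ post"] conjI exI[of _ r])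
    show "facet_less n A (pre @ [x, y] @ post) sp"
      using xy split by (auto simp: facet_less_splice facet_less_def adeg_def)
    show "node (pre @ [x, y] @ post) r = node sp r"
      unfolding split(1) by (rule node_splice_outside) (use same_sum r_def in auto)
  qed (use sp split xy same_sum r_def in \<open>auto simp: fun_eq_iff\<close>)
qed

lemma rerouting_by_lowering:
  assumes sp: "set (P @ (w1 # ws) @ B) \<subseteq> Vnd n d" "A \<notin> set (P @ (w1 # ws) @ B)"
    "2 \<le> length ws" "P \<noteq> [] \<or> B \<noteq> []"
    and x: "x \<in> Vnd n d" "x \<noteq> A" "\<forall>k. x k \<le> vsum (w1 # ws) k" "lex_less n x w1"
  shows "\<exists>sp'. smaller_rerouting n d A sp' (P @ (w1 # ws) @ B)"
proof -
  have "vsum (w1 # ws) \<in> Vnd n (Suc (length ws) * d)"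
    using vsum_in_Vnd[of "w1 # ws"] sp(1) by auto
  then obtain ls where ls: "length ls = length ws" "set ls \<subseteq> Vnd n d - {A}"
      "vsum (x # ls) = vsum (w1 # ws)"
    using chain_from_first_link x(1,3) sp(3) by blast
  have less: "facet_less n A (x # ls) (w1 # ws)"
    using x(2,4) ls(2) sp(2) by (auto simp: facet_less_def adeg_def count_list_0_iff)
  define r where "r = (if P \<noteq> [] then length P else length P + Suc (length ws))"
  show ?thesis unfolding smaller_rerouting_def
  proof (intro exI[of _ "P @ (x # ls) @ B"] conjI exI[of _ r])
    show "node (P @ (x # ls) @ B) r = node (P @ (w1 # ws) @ B) r"
      by (rule node_splice_outside) (use ls r_def in auto)
    show "facet_less n A (P @ (x # ls) @ B) (P @ (w1 # ws) @ B)"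
      using facet_less_splice[of "x # ls" "w1 # ws" n A P B] less ls(1) by simp
  qed (use sp x ls r_def in \<open>auto simp: fun_eq_iff\<close>)
qed

end

locale excluded_link = sumset_closed +
  assumes n_ge2: "2 \<le> n" and d_ge2: "2 \<le> d" and A_in: "A \<in> Vnd n d"
    and A_mono: "\<forall>s t. s \<le> t \<and> t < n \<longrightarrow> A s \<le> A t"
    and A_ne1: "A \<noteq> (\<lambda>s. if s = n - 1 then d else 0)"
    and A_ne2: "A \<noteq> (\<lambda>s. if s = n - 2 then 1 else if s = n - 1 then d - 1 else 0)"
    and A_ne3: "A \<noteq> (\<lambda>s. if s = n - 2 then 2 else if s = n - 1 then d - 2 else 0)"
begin

lemma d_pos: "0 < d"
  using d_ge2 by simp

lemma excluded_not_single_support: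
  assumes "\<forall>k. k \<noteq> j \<longrightarrow> A k = 0"
  shows False
proof -
  have "(\<Sum>i<n. A i) = (\<Sum>i<n. if i = j then A j else 0)"
    by (rule sum.cong) (use assms in auto)
  then have sum_eq: "(\<Sum>i<n. A i) = (if j < n then A j else 0)" by (simp add: sum.delta')
  then have j: "j < n" "A j = d" using Vnd_sum[OF A_in] d_pos by (auto split: if_splits)
  show False
  proof (cases "j = n - 1")
    case True
    then have "A = (\<lambda>s. if s = n - 1 then d else 0)" using assms j by (auto intro!: ext)
    with A_ne1 show False ..
  next
    case False
    then have "A j \<le> A (n - 1)" using A_mono j(1) by auto
    moreover have "A (n - 1) = 0" using assms False by auto
    ultimately show False using j(2) d_pos by simp
  qed
qed

lemma excluded_not_two_support:
  assumes "p \<le> q" "\<forall>k. k \<noteq> p \<and> k \<noteq> q \<longrightarrow> A k = 0" "A q \<le> 2"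
  shows False
proof (cases "p = q \<or> A p = 0")
  case True
  then have "\<forall>k. k \<noteq> q \<longrightarrow> A k = 0" using assms(2) by metis
  then show False by (rule excluded_not_single_support)
next
  case False
  then have pq: "p < q" and Ap: "1 \<le> A p" using assms(1) by auto
  have qn: "q < n"
  proof (rule ccontr)
    assume "\<not> q < n"
    then have "\<forall>k. k \<noteq> p \<longrightarrow> A k = 0" using assms(2) Vnd_vanishes[OF A_in] by auto
    then show False by (rule excluded_not_single_support)
  qed
  have Apq: "A p \<le> A q" using A_mono pq qn by auto
  have q_last: "q = n - 1"
  proof (rule ccontr)
    assume "q \<noteq> n - 1"
    then have "q < n - 1" using qn by simp
    then have "A q \<le> A (n - 1)" using A_mono by simp
    moreover have "A (n - 1) = 0" using assms(2) pq \<open>q < n - 1\<close> by auto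
    ultimately show False using Ap Apq by simp
  qed
  have p_prev: "p = n - 2"
  proof (rule ccontr)
    assume "p \<noteq> n - 2"
    then have "Suc p < q" using pq q_last by simp
    then have "A p \<le> A (Suc p)" using A_mono qn by simp
    moreover have "A (Suc p) = 0" using assms(2) \<open>Suc p < q\<close> by auto
    ultimately show False using Ap by simp
  qed
  have "(\<Sum>i<n. A i) = (\<Sum>i<n. (if i = p then A p else 0) + (if i = q then A q else 0))"
    by (rule sum.cong) (use assms(2) pq in auto)
  then have sum_pq: "A p + A q = d" using Vnd_sum[OF A_in] pq qn by (simp add: sum.distrib)
  have "A p = 1 \<or> A p = 2" using Ap Apq assms(3) by auto
  then show False
  proof
    assume "A p = 1"
    then have "A = (\<lambda>s. if s = n - 2 then 1 else if s = n - 1 then d - 1 else 0)"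
      using assms(2) p_prev q_last sum_pq by (auto intro!: ext)
    with A_ne2 show False ..
  next
    assume "A p = 2"
    then have "A = (\<lambda>s. if s = n - 2 then 2 else if s = n - 1 then d - 2 else 0)"
      using assms(2) p_prev q_last sum_pq by (auto intro!: ext)
    with A_ne3 show False ..
  qed
qed

lemma room_le_one:
  assumes a_in: "a \<in> Vnd n d" and only: "only_lex_smaller n d A a D"
    and j: "lead a < j" "j < n" "1 \<le> D j"
  shows "D j \<le> 1"
proof (rule ccontr)
  assume "\<not> D j \<le> 1"
  then have shape: "a (lead a) = 1" "\<forall>k>j. a k = 0"
    using lead_unit_if_double_room[OF d_pos a_in only j(1,2)] by auto
  have A_eq: "A = move_unit a (lead a) j" using excluded_eq_move_lead[OF d_pos a_in only j] .
  have "A k = 0" if "k \<noteq> j" for k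
  proof -
    have "k < lead a \<or> k = lead a \<or> lead a < k \<and> k < j \<or> j < k" using that by linarith
    moreover have "a k = 0" if "lead a < k" "k < j"
      using zero_between_lead_and_room[OF d_pos a_in only that j(2,3)] .
    ultimately show ?thesis
      using A_eq shape lead_props(3)[OF a_in d_pos] that by (auto simp: move_unit_def)
  qed
  then show False using excluded_not_single_support by blast
qed

lemma support_beyond_room:
  assumes a_in: "a \<in> Vnd n d" and only: "only_lex_smaller n d A a D"
    and t: "lead a < t" "t < n" "1 \<le> D t"
  shows "\<exists>j\<ge>t. 0 < a j"
proof (rule ccontr)
  assume "\<not> ?thesis"
  then have "a k = 0" if "k \<noteq> lead a" for k
    using lead_props(3)[OF a_in d_pos, of k] zero_between_lead_and_room[OF d_pos a_in only _ _ t(2,3), of k]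
      that by (metis linorder_neqE_nat not_le not_gr0)
  moreover have "A = move_unit a (lead a) t" using excluded_eq_move_lead[OF d_pos a_in only t] .
  ultimately show False
    using excluded_not_two_support[of "lead a" t] t(1) by (simp add: move_unit_def)
qed

lemma lowering_exists:
  assumes a1: "a1 \<in> Vnd n d" and a2: "a2 \<in> Vnd n d" and b: "b \<in> Vnd n d" "b \<noteq> A"
    and b_less: "lex_less n b a1" and a2_not_less: "\<not> lex_less n a2 a1"
    and a2_le: "\<forall>k. a2 k \<le> M k" and b_le: "\<forall>k. b k \<le> a1 k + M k + D k"
  shows "\<not> only_lex_smaller n d A a1 M \<or> \<not> only_lex_smaller n d A a2 D"
proof (rule ccontr)
  assume "\<not> ?thesis"
  then have only1: "only_lex_smaller n d A a1 M" and only2: "only_lex_smaller n d A a2 D" by auto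
  define \<mu>1 \<mu>2 where "\<mu>1 = lead a1" and "\<mu>2 = lead a2"
  have below1: "a1 k = 0" if "k < \<mu>1" for k using lead_props(3)[OF a1 d_pos] that \<mu>1_def by blast
  have below2: "a2 k = 0" if "k < \<mu>2" for k using lead_props(3)[OF a2 d_pos] that \<mu>2_def by blast
  have "\<not> (\<forall>k. b k \<le> a1 k + M k)"
    using only_lex_smallerD[OF d_pos a1 only1 b(1) _ b_less] b(2) by blast
  then obtain t where t: "a1 t + M t < b t" by (meson not_le)
  have tn: "t < n" using Vnd_support[OF b(1)] t by simp
  have Dt: "1 \<le> D t" using t b_le[rule_format, of t] by simp
  have \<mu>1t: "\<mu>1 < t" unfolding \<mu>1_def using lead_less_if_lex_less_exceeds[OF b_less] t by simp
  have \<mu>21: "\<mu>2 \<le> \<mu>1" unfolding \<mu>1_def \<mu>2_def by (rule lead_le_if_not_lex_less[OF a1 d_pos a2_not_less])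
  have \<mu>2t: "\<mu>2 < t" using \<mu>21 \<mu>1t by simp
  have A2: "A k = a2 k - (if k = \<mu>2 then 1 else 0) + (if k = t then 1 else 0)" for k
    using excluded_eq_move_lead[OF d_pos a2 only2 _ tn Dt] \<mu>2t by (simp add: \<mu>2_def move_unit_def)
  have gap2: "a2 k = 0" if "\<mu>2 < k" "k < t" for k
    using zero_between_lead_and_room[OF d_pos a2 only2 _ that(2) tn Dt] that(1) \<mu>2_def by blast
  obtain j1 where j1: "t \<le> j1" "0 < a2 j1"
    using support_beyond_room[OF a2 only2 _ tn Dt] \<mu>2t \<mu>2_def by blast
  have j1n: "j1 < n" using Vnd_support[OF a2 j1(2)] .
  have Mj1: "1 \<le> M j1" using j1(2) a2_le[rule_format, of j1] by simp
  have \<mu>1j1: "lead a1 < j1" using \<mu>1t j1(1) \<mu>1_def by simp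
  have A1: "A k = a1 k - (if k = \<mu>1 then 1 else 0) + (if k = j1 then 1 else 0)" for k
    using excluded_eq_move_lead[OF d_pos a1 only1 \<mu>1j1 j1n Mj1] by (simp add: \<mu>1_def move_unit_def)
  have "M j1 \<le> 1" using room_le_one[OF a1 only1 \<mu>1j1 j1n Mj1] .
  then have a2j1: "a2 j1 = 1" using j1(2) a2_le[rule_format, of j1] by simp
  have supp2: "a2 k = 0" if "k \<noteq> \<mu>2" "k \<noteq> j1" for k
  proof (rule ccontr)
    assume nz: "a2 k \<noteq> 0"
    then have "\<mu>2 < k" using below2 that by (cases "k < \<mu>2") auto
    then have "lead a1 < k" using gap2[of k] nz \<mu>1t \<mu>1_def by (cases "t \<le> k") auto
    moreover have "k < n" "1 \<le> M k" using nz a2_le[rule_format, of k] Vnd_support[OF a2] by auto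
    ultimately have "k = j1" using room_index_unique[OF d_pos a1 only1 _ _ _ \<mu>1j1 j1n Mj1] by blast
    with that show False by simp
  qed
  show False
  proof (cases "\<mu>2 < \<mu>1")
    case True
    have "A k = 0" if "k \<noteq> t" "k \<noteq> j1" for k
    proof (cases "k = \<mu>2")
      case True
      then show ?thesis using A1[of k] below1[of k] \<open>\<mu>2 < \<mu>1\<close> \<mu>2t j1(1) by simp
    next
      case False
      then show ?thesis using A2[of k] supp2[of k] that by simp
    qed
    moreover have "A j1 \<le> 2" using A2[of j1] a2j1 \<mu>2t j1(1) by simp
    ultimately show False using excluded_not_two_support[of t j1] j1(1) by blast
  next
    case False
    have "t = j1"
    proof (rule ccontr)
      assume "t \<noteq> j1"
      then have "a1 t = 0"
        using zero_between_lead_and_room[OF d_pos a1 only1 _ _ j1n Mj1] \<mu>1t j1(1) \<mu>1_def by simp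
      then show False using A1[of t] A2[of t] \<mu>1t \<mu>2t \<open>t \<noteq> j1\<close> by simp
    qed
    then show False
      using excluded_not_two_support[of \<mu>2 t] A2 supp2 a2j1 \<mu>2t by simp
  qed
qed

lemma rerouting_below_first_link:
  assumes sp: "set sp \<subseteq> Vnd n d" "A \<notin> set sp" "sp = a1 # a2 # mid @ [am]" "mid \<noteq> []"
    and b: "b \<in> Vnd n d" "b \<noteq> A" "lex_less n b a1" "\<forall>k. b k \<le> vsum sp k"
    and a2_not_less: "\<not> lex_less n a2 a1"
  shows "\<exists>sp'. smaller_rerouting n d A sp' sp"
proof -
  define M D where "M = vsum (a2 # mid)" and "D = vsum (mid @ [am])"
  have "\<forall>k. a2 k \<le> M k" by (simp add: M_def)
  moreover have "vsum sp k \<le> a1 k + M k + D k" for k by (simp add: sp(3) M_def D_def)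
  then have "\<forall>k. b k \<le> a1 k + M k + D k" using b(4) order_trans by blast
  ultimately have "\<not> only_lex_smaller n d A a1 M \<or> \<not> only_lex_smaller n d A a2 D"
    using lowering_exists[OF _ _ b(1-3) a2_not_less] sp(1,3) by simp
  then show ?thesis
  proof
    assume "\<not> only_lex_smaller n d A a1 M"
    then obtain x where "x \<in> Vnd n d" "x \<noteq> A" "\<forall>k. x k \<le> vsum (a1 # a2 # mid) k"
        "lex_less n x a1"
      unfolding only_lex_smaller_def M_def by auto
    then show ?thesis
      using rerouting_by_lowering[of "[]" a1 "a2 # mid" "[am]"] sp by (simp add: Suc_le_eq)
  next
    assume "\<not> only_lex_smaller n d A a2 D"
    then obtain x where "x \<in> Vnd n d" "x \<noteq> A" "\<forall>k. x k \<le> vsum (a2 # mid @ [am]) k"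
        "lex_less n x a2"
      unfolding only_lex_smaller_def D_def by auto
    then show ?thesis
      using rerouting_by_lowering[of "[a1]" a2 "mid @ [am]" "[]"] sp by (simp add: Suc_le_eq)
  qed
qed

lemma rerouting_avoiding_excluded:
  assumes sp: "set sp \<subseteq> Vnd n d" "A \<notin> set sp" "4 \<le> length sp"
    and sq: "set sq \<subseteq> Vnd n d" "length sq = length sp" "vsum sq = vsum sp" "facet_less n A sq sp"
  shows "\<exists>sp'. smaller_rerouting n d A sp' sp"
proof -
  obtain a1 a2 rest where sp_rest: "sp = a1 # a2 # rest" and "2 \<le> length rest"
    using sp(3) by (auto simp: Suc_le_length_iff numeral_eq_Suc)
  then have "rest \<noteq> []" by auto
  with sp_rest obtain mid am where sp_eq: "sp = a1 # a2 # mid @ [am]"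
    by (metis append_butlast_last_id)
  have mid: "mid \<noteq> []" using sp(3) sp_eq by auto
  obtain b sq' where sq_eq: "sq = b # sq'" using sq(2) sp_eq by (cases sq) auto
  have b: "b \<in> Vnd n d" "b \<noteq> A"
    using sq(1,4) sp(2) sq_eq by (auto simp: facet_less_def adeg_def count_list_0_iff)
  have "b k \<le> vsum sq k" for k using sq_eq by simp
  then have b_le: "\<forall>k. b k \<le> vsum sp k" using sq(3) by simp
  have seq_less: "seq_less n sq sp"
    using sq(4) sp(2) by (simp add: facet_less_def adeg_def count_list_0_iff)
  consider (swap) "lex_less n a2 a1" | (same_start) "b = a1" | (lower) "\<not> lex_less n a2 a1" "b \<noteq> a1"
    by blast
  then show ?thesis
  proof cases
    case swap
    show ?thesis unfolding smaller_rerouting_def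
    proof (intro exI[of _ "a2 # a1 # mid @ [am]"] conjI exI[of _ 2])
      show "facet_less n A (a2 # a1 # mid @ [am]) sp"
        using swap sp(2) sp_eq by (simp add: facet_less_def adeg_def)
    qed (use sp sp_eq in \<open>auto simp: fun_eq_iff node_eq_vsum_take\<close>)
  next
    case same_start
    show ?thesis unfolding smaller_rerouting_def using sq sp(3) same_start sq_eq
      by (intro exI[of _ sq] conjI exI[of _ 1]) (auto simp: sp_eq node_eq_vsum_take)
  next
    case lower
    then have "lex_less n b a1" using seq_less sp_eq sq_eq by simp
    then show ?thesis using rerouting_below_first_link[OF sp(1,2) sp_eq mid b _ b_le] lower by blast
  qed
qed

lemma smaller_rerouting_exists:
  assumes "set sp \<subseteq> Vnd n d" "4 \<le> length sp"
    and "set sq \<subseteq> Vnd n d" "length sq = length sp" "vsum sq = vsum sp" "facet_less n A sq sp"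
  shows "\<exists>sp'. smaller_rerouting n d A sp' sp"
  using rerouting_through_excluded rerouting_avoiding_excluded assms by (cases "A \<in> set sp") auto

end
lemma nodes_agree_outside_window:
  assumes p: "set p \<subseteq> Vnd n d" and q: "set q \<subseteq> Vnd n d" "vsum q = vsum p" and d: "0 < d"
    and j: "j < length p" and sub: "open_chain p - {node p l | l. l \<in> {i..j}} \<subseteq> open_chain q"
    and l: "l \<le> length p" "l < i \<or> j < l"
  shows "node q l = node p l"
proof -
  have lq: "length q = length p" using length_eq_if_vsum_eq[OF q(1) p q(2) d] .
  consider "l = 0" | "l = length p" | "1 \<le> l" "l \<le> length p - 1" using l(1) by linarith
  then show ?thesis
  proof cases
    case 1
    then show ?thesis by (simp add: node_eq_vsum_take)
  next
    case 2
    then show ?thesis using lq q(2) node_length[of p] node_length[of q] by simp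
  next
    case 3
    have "node p l \<notin> {node p l | l. l \<in> {i..j}}"
    proof
      assume "node p l \<in> {node p l | l. l \<in> {i..j}}"
      then obtain l' where l': "l' \<in> {i..j}" "node p l = node p l'" by blast
      have "l = l'" by (rule node_index_eq[OF p p _ _ l'(2) d]) (use l l' j in auto)
      then show False using l' l by auto
    qed
    moreover have "node p l \<in> open_chain p" using 3 unfolding open_chain_def by blast
    ultimately have "node p l \<in> open_chain q" using sub by blast
    then obtain l' where l': "node p l = node q l'" "l' \<le> length q - 1"
      unfolding open_chain_def by blast
    have "l = l'" by (rule node_index_eq[OF p q(1) _ _ l'(1) d]) (use l l' lq in auto)
    then show ?thesis using l' by simp
  qed
qed

lemma take_drop_split: "xs = take a xs @ take b (drop a xs) @ drop (a + b) xs"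
  by (metis append_take_drop_id drop_drop add.commute)

lemma split_at_window:
  assumes "length q = length p" "\<forall>t<length p. Suc t < i \<or> j < t \<longrightarrow> q ! t = p ! t"
    "1 \<le> i" "i \<le> j" "j < length p"
  obtains P sp sq B where "p = P @ sp @ B" "q = P @ sq @ B" "length P = i - 1"
    "length sp = j + 2 - i" "length sq = j + 2 - i"
proof -
  have sum: "i - 1 + (j + 2 - i) = j + 1" using assms(3,4) by simp
  have split_p: "p = take (i - 1) p @ take (j + 2 - i) (drop (i - 1) p) @ drop (j + 1) p"
    using take_drop_split[of p "i - 1" "j + 2 - i"] unfolding sum .
  have split_q: "q = take (i - 1) q @ take (j + 2 - i) (drop (i - 1) q) @ drop (j + 1) q"
    using take_drop_split[of q "i - 1" "j + 2 - i"] unfolding sum .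
  have "take (i - 1) q = take (i - 1) p" by (rule nth_equalityI) (use assms in auto)
  moreover have "drop (j + 1) q = drop (j + 1) p" by (rule nth_equalityI) (use assms in auto)
  ultimately show thesis using that[OF split_p] split_q assms(1,3-5) by simp
qed

lemma window_decomposition:
  assumes p: "is_chain n d lam p" and q: "is_chain n d lam q" and d: "0 < d"
    and ij: "1 \<le> i" "i \<le> j" "j < length p"
    and sub: "open_chain p - {node p l | l. l \<in> {i..j}} \<subseteq> open_chain q"
  obtains P sp sq B where "p = P @ sp @ B" "q = P @ sq @ B" "length P = i - 1"
    "length sp = j + 2 - i" "length sq = j + 2 - i" "vsum sq = vsum sp"
proof -
  have pV: "set p \<subseteq> Vnd n d" and qV: "set q \<subseteq> Vnd n d" and sums: "vsum q = vsum p"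
    using p q by (auto simp: is_chain_def node_length)
  have lengths: "length q = length p" using length_eq_if_vsum_eq[OF qV pV sums d] .
  note agree = nodes_agree_outside_window[OF pV qV sums d ij(3) sub]
  have "\<forall>t<length p. Suc t < i \<or> j < t \<longrightarrow> q ! t = p ! t"
  proof (intro allI impI ext)
    fix t x assume t: "t < length p" "Suc t < i \<or> j < t"
    have "node q (Suc t) = node p (Suc t)" using agree[of "Suc t"] t by auto
    moreover have "node q t = node p t" using agree[of t] t by auto
    ultimately show "(q ! t) x = (p ! t) x"
      using node_Suc[of t q x] node_Suc[of t p x] t(1) lengths by simp
  qed
  then obtain P sp sq B where split: "p = P @ sp @ B" "q = P @ sq @ B" "length P = i - 1"
      "length sp = j + 2 - i" "length sq = j + 2 - i"
    by (rule split_at_window[OF lengths _ ij])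
  moreover have "vsum sq = vsum sp" using sums split(1,2) by (simp add: fun_eq_iff)
  ultimately show thesis using that by blast
qed

lemma face_after_rerouting:
  assumes p: "is_chain n d lam p" "p = P @ sp @ B" and re: "smaller_rerouting n d a sp' sp"
    and ij: "i = Suc (length P)" "Suc j = length P + length sp"
  shows "\<exists>l\<in>{i..j}. face_Fless_cap n d a lam p
           (insert (node p l) (open_chain p - {node p l | l. l \<in> {i..j}}))"
proof -
  obtain r where r: "0 < r" "r < length sp" "node sp' r = node sp r"
    and sp': "set sp' \<subseteq> Vnd n d" "length sp' = length sp" "vsum sp' = vsum sp"
      "facet_less n a sp' sp"
    using re unfolding smaller_rerouting_def by blast
  define q' where "q' = P @ sp' @ B"
  have lengths: "length q' = length p" using sp'(2) p(2) q'_def by simp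
  have "vsum q' = vsum p" using sp'(3) p(2) q'_def by (simp add: fun_eq_iff)
  then have "node q' (length q') = node p (length p)" unfolding node_length .
  then have chain: "is_chain n d lam q'" using p sp'(1) unfolding is_chain_def q'_def by auto
  have less: "facet_less n a q' p" using sp'(2,4) p(2) q'_def by (simp add: facet_less_splice)
  have agree: "node q' l = node p l" if "l \<notin> {i..j}" for l
    unfolding q'_def p(2) by (rule node_splice_outside) (use sp' that ij in auto)
  define l where "l = length P + r"
  define S where "S = open_chain p - {node p l | l. l \<in> {i..j}}"
  have l: "l \<in> {i..j}" "1 \<le> l" "l \<le> length p - 1" using r(1,2) ij p(2) l_def by auto
  have "node q' l = node p l"
    unfolding q'_def p(2) l_def using node_splice_inside sp'(2) r(3) by blast
  then have "node p l \<in> open_chain q'" using l lengths unfolding open_chain_def by force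
  moreover have "S \<subseteq> open_chain q'"
  proof
    fix s assume "s \<in> S"
    then obtain l' where "s = node p l'" "1 \<le> l'" "l' \<le> length p - 1" "l' \<notin> {i..j}"
      unfolding S_def open_chain_def by blast
    then show "s \<in> open_chain q'" using agree lengths unfolding open_chain_def by force
  qed
  moreover have "insert (node p l) S \<subseteq> open_chain p"
    using l unfolding S_def open_chain_def by blast
  ultimately have "face_Fless_cap n d a lam p (insert (node p l) S)"
    unfolding face_Fless_cap_def using chain less by blast
  then show ?thesis using l(1) unfolding S_def by blast
qed

theorem lemma3p5:
  fixes n d :: nat and a lam :: "nat \<Rightarrow> nat" and p :: "(nat \<Rightarrow> nat) list" and i j :: nat
  assumes "n \<ge> 2" and "d \<ge> 2"
    and "a \<in> Vnd n d"
    and "\<forall>s t. s \<le> t \<and> t < n \<longrightarrow> a s \<le> a t"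
    and "a \<noteq> (\<lambda>s. if s = n - 1 then d else 0)"
    and "a \<noteq> (\<lambda>s. if s = n - 2 then 1 else if s = n - 1 then d - 1 else 0)"
    and "a \<noteq> (\<lambda>s. if s = n - 2 then 2 else if s = n - 1 then d - 2 else 0)"
    and "{vadd x y | x y. x \<in> Vnd n d - {a} \<and> y \<in> Vnd n d - {a}} = Vnd n (2 * d)"
    and "lam \<in> gen_semigroup (Vnd n d - {a})"
    and "is_chain n d lam p"
    and "adeg a p \<ge> 1"
    and "1 \<le> i" and "j \<le> length p - 1"
    and "facet_Fless_cap n d a lam p (open_chain p - {node p l | l. l \<in> {i..j}})"
  shows "card {i..j} \<le> 2"
proof (rule ccontr)
  assume "\<not> card {i..j} \<le> 2"
  then have window: "i + 2 \<le> j" by simp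
  interpret excluded_link n d a using assms(1-8) by unfold_locales
  define S where "S = open_chain p - {node p l | l. l \<in> {i..j}}"
  have maximal: "\<And>T. face_Fless_cap n d a lam p T \<Longrightarrow> S \<subseteq> T \<Longrightarrow> T = S"
    and "face_Fless_cap n d a lam p S"
    using assms(14) unfolding facet_Fless_cap_def S_def by blast+
  then obtain q where q: "is_chain n d lam q" "facet_less n a q p" "S \<subseteq> open_chain q"
    unfolding face_Fless_cap_def by blast
  have ij: "i \<le> j" "j < length p" using window assms(13) by auto
  obtain P sp sq B where split: "p = P @ sp @ B" "q = P @ sq @ B" "length P = i - 1"
      "length sp = j + 2 - i" "length sq = j + 2 - i" "vsum sq = vsum sp"
    by (rule window_decomposition[OF assms(10) q(1) d_pos assms(12) ij q(3)[unfolded S_def]])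
  have "set sp \<subseteq> Vnd n d" "set sq \<subseteq> Vnd n d"
    using assms(10) q(1) split(1,2) by (auto simp: is_chain_def)
  moreover have "facet_less n a sq sp"
    using q(2) facet_less_splice[of sq sp n a P B] split by simp
  moreover have "4 \<le> length sp" "length sq = length sp" using split(4,5) window by auto
  ultimately obtain sp' where rerouting: "smaller_rerouting n d a sp' sp"
    using smaller_rerouting_exists split(6) by blast
  have "i = Suc (length P)" "Suc j = length P + length sp" using split(3,4) assms(12) window by auto
  then obtain l where "l \<in> {i..j}" "face_Fless_cap n d a lam p (insert (node p l) S)"
    using face_after_rerouting[OF assms(10) split(1) rerouting] unfolding S_def by blast
  with maximal have "node p l \<in> S" by blast
  with \<open>l \<in> {i..j}\<close> show False unfolding S_def by blast
qed

end
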